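(* For integers $n,m$ and $y=(y_1,y_2,y_3)\in Q$, \[\sum_{r=y_1}^n\sum_{s=y_1+y_2}^m\mathcal{K}_{n,m;r,s}(z,w;q)\,\Phi_{r,s;y}(z,w;q)=z^{y_1}w^{y_1+y_2}q^{\frac12(y_1^2+y_2^2+y_3^2)}\Phi_{n,m;y}(z,w;q).\]
   Context: $Q=\{y\in\mathbb{Z}^3:y_1+y_2+y_3=0\}$. For $n\in\mathbb{Z}$, $(a;q)_n=(a;q)_\infty/(aq^n;q)_\infty$ (so $1/(q;q)_n=0$ for $n<0$). $\mathcal{K}_{n,m;r,s}(z,w;q):=\frac{z^rw^sq^{r^2-rs+s^2}}{(q;q)_{n-r}(q;q)_{m-s}}$, and \[\Phi_{n,m;y}(z,w;q):=\frac{(zwq;q)_{n+m}}{(q;q)_{n-y_1}(zq;q)_{n-y_2}(zwq;q)_{n-y_3}(q;q)_{m+y_3}(wq;q)_{m+y_2}(zwq;q)_{m+y_1}}.\] A sum $\sum_{r=A}^B$ with $B<A$ is empty. *)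

theory Defs
  imports "HOL-Analysis.Analysis"
begin

definition qpoch_inf :: "complex \<Rightarrow> complex \<Rightarrow> complex" where
  "qpoch_inf a q = (\<Prod>k. 1 - a * q ^ k)"

text \<open>(a;q)_n = (a;q)_inf / (a q^n;q)_inf for integer n (so 1/(q;q)_n = 0 for n < 0).\<close>
definition qpoch :: "complex \<Rightarrow> complex \<Rightarrow> int \<Rightarrow> complex" where
  "qpoch a q n = qpoch_inf a q / qpoch_inf (a * (q powi n)) q"

definition Kker :: "int \<Rightarrow> int \<Rightarrow> int \<Rightarrow> int \<Rightarrow> complex \<Rightarrow> complex \<Rightarrow> complex \<Rightarrow> complex" where
  "Kker n m r s z w q =
     (z powi r) * (w powi s) * (q powi (r * r - r * s + s * s)) / (qpoch q q (n - r) * qpoch q q (m - s))"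

definition Phi :: "int \<Rightarrow> int \<Rightarrow> int \<Rightarrow> int \<Rightarrow> int \<Rightarrow> complex \<Rightarrow> complex \<Rightarrow> complex \<Rightarrow> complex" where
  "Phi n m y1 y2 y3 z w q =
     qpoch (z*w*q) q (n + m) /
     (qpoch q q (n - y1) * qpoch (z*q) q (n - y2) * qpoch (z*w*q) q (n - y3) *
      qpoch q q (m + y3) * qpoch (w*q) q (m + y2) * qpoch (z*w*q) q (m + y1))"

end

theory Submission
  imports Defs
begin

text \<open>Write \<open>a = y\<^sub>1\<close>, \<open>b = y\<^sub>1 + y\<^sub>2\<close> and shift the summation indices to \<open>(r, s) = (a + i, b + j)\<close>.
  All q-Pochhammer symbols then have natural index, and with \<open>Z = z q\<^sup>2\<^sup>a\<^sup>-\<^sup>b\<close>, \<open>W = w q\<^sup>2\<^sup>b\<^sup>-\<^sup>a\<close>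
  the identity reduces to the case \<open>y = 0\<close>: the sum over \<open>i \<le> N\<close>, \<open>j \<le> M\<close> of
  \<open>K(N, M; i, j) \<Phi>(i, j)\<close> equals \<open>\<Phi>(N, M)\<close>. Expanding \<open>(Z W q; q)\<^sub>i\<^sub>+\<^sub>j\<close> as a sum over \<open>k\<close> of
  products of a term in \<open>i\<close> and a term in \<open>j\<close> decouples the double sum. After exchanging the order
  of summation, the sums over \<open>i\<close>, over \<open>j\<close> and finally over \<open>k\<close> are all instances of one
  q-analogue of the Vandermonde convolution, proved by induction from the q-Pascal rule.\<close>

section \<open>q-Pochhammer symbols\<close>

lemma convergent_prod_qpoch_factors:
  fixes a q :: complex
  assumes "norm q < 1"
  shows "convergent_prod (\<lambda>k. 1 - a * q ^ k)"
proof -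
  have "summable (\<lambda>k. norm a * norm q ^ k)"
    using assms by (intro summable_mult summable_geometric) auto
  then have "summable (\<lambda>k. norm ((1 - a * q ^ k) - 1))"
    by (simp add: norm_mult norm_power)
  then show ?thesis
    by (intro abs_convergent_prod_imp_convergent_prod summable_imp_abs_convergent_prod)
qed

lemma qpoch_inf_rec:
  assumes "norm q < 1"
  shows "qpoch_inf a q = (1 - a) * qpoch_inf (a * q) q"
proof -
  have "(\<lambda>k. 1 - (a * q) * q ^ k) has_prod qpoch_inf (a * q) q"
    unfolding qpoch_inf_def
    by (rule convergent_prod_has_prod[OF convergent_prod_qpoch_factors[OF assms]])
  then have "(\<lambda>k. (\<lambda>k. 1 - a * q ^ k) (Suc k)) has_prod qpoch_inf (a * q) q"
    by (simp add: mult_ac)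
  then have "(\<lambda>k. 1 - a * q ^ k) has_prod (qpoch_inf (a * q) q * (1 - a))"
    using has_prod_Suc_imp[of "\<lambda>k. 1 - a * q ^ k"] by simp
  then show ?thesis
    unfolding qpoch_inf_def by (simp add: has_prod_unique[symmetric])
qed

lemma qpoch_inf_nonzero:
  assumes "norm q < 1" "\<And>k::nat. a * q ^ k \<noteq> 1"
  shows "qpoch_inf a q \<noteq> 0"
  unfolding qpoch_inf_def
  using assms by (intro prodinf_nonzero convergent_prod_qpoch_factors) (auto simp: right_diff_distrib)

definition qprod :: "complex \<Rightarrow> complex \<Rightarrow> nat \<Rightarrow> complex" where
  "qprod a q n = (\<Prod>t<n. 1 - a * q ^ t)"

lemma qprod_0 [simp]: "qprod a q 0 = 1"
  by (simp add: qprod_def)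

lemma qprod_zero_left [simp]: "qprod 0 q n = 1"
  by (simp add: qprod_def)

lemma qprod_Suc: "qprod a q (Suc n) = qprod a q n * (1 - a * q ^ n)"
  by (simp add: qprod_def)

lemma qprod_Suc_shift: "qprod a q (Suc n) = (1 - a) * qprod (a * q) q n"
  unfolding qprod_def by (subst prod.lessThan_Suc_shift) (simp add: mult.assoc)

lemma qprod_add: "qprod a q (m + n) = qprod a q m * qprod (a * q ^ m) q n"
  by (induction n) (simp_all add: qprod_Suc power_add mult.assoc)

lemma qprod_nonzero: "(\<And>t. a * q ^ t \<noteq> 1) \<Longrightarrow> qprod a q n \<noteq> 0"
  unfolding qprod_def by (simp add: prod_zero_iff)

lemma q_power_Suc_neq_1:
  fixes q :: complex
  assumes "norm q < 1"
  shows "q * q ^ t \<noteq> 1"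
proof
  assume "q * q ^ t = 1"
  then have "norm q ^ Suc t = 1"
    by (metis norm_one norm_power power_Suc)
  moreover have "norm q ^ Suc t < 1"
    using assms power_less_one_iff[of "norm q" "Suc t"] by simp
  ultimately show False
    by simp
qed

lemma qprod_q_nonzero: "norm q < 1 \<Longrightarrow> qprod q q n \<noteq> 0"
  by (rule qprod_nonzero) (simp add: q_power_Suc_neq_1)

lemma qpoch_inf_qprod:
  assumes "norm q < 1"
  shows "qpoch_inf a q = qprod a q n * qpoch_inf (a * q ^ n) q"
proof (induction n)
  case (Suc n)
  have "qpoch_inf (a * q ^ n) q = (1 - a * q ^ n) * qpoch_inf (a * q ^ n * q) q"
    by (rule qpoch_inf_rec[OF assms])
  with Suc show ?case
    by (simp add: qprod_Suc mult_ac)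
qed simp

lemma qpoch_of_nat:
  assumes "norm q < 1" "qpoch_inf (a * q ^ n) q \<noteq> 0"
  shows "qpoch a q (int n) = qprod a q n"
  using assms qpoch_inf_qprod[OF assms(1), of a n] by (simp add: qpoch_def)

lemma qpoch_add:
  assumes "q \<noteq> 0" "qpoch_inf (a * q powi c) q \<noteq> 0"
  shows "qpoch a q (c + d) = qpoch a q c * qpoch (a * q powi c) q d"
  using assms by (simp add: qpoch_def power_int_add mult.assoc)

text \<open>For \<open>c < 0\<close> the product \<open>(q\<^sup>c\<^sup>+\<^sup>1; q)\<^sub>\<infinity>\<close> contains the factor \<open>1 - q\<^sup>0\<close>.\<close>
lemma qpoch_q_neg:
  assumes "norm q < 1" "q \<noteq> 0" "c < 0"
  shows "qpoch q q c = 0"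
proof -
  define t where "t = nat (- c - 1)"
  have "c + 1 = - int t"
    using assms(3) by (simp add: t_def)
  moreover have "q * q powi c = q powi (c + 1)"
    using assms(2) by (simp add: power_int_add)
  ultimately have "q * q powi c = inverse (q ^ t)"
    by (simp add: power_int_minus)
  moreover have "qprod (inverse (q ^ t)) q (Suc t) = 0"
    unfolding qprod_def using assms(2) by (simp add: prod_zero_iff)
  ultimately have "qpoch_inf (q * q powi c) q = 0"
    using qpoch_inf_qprod[OF assms(1), of "inverse (q ^ t)" "Suc t"] by simp
  then show ?thesis
    by (simp add: qpoch_def)
qed

lemma qpoch_inf_shift_nonzero:
  assumes "norm q < 1" "q \<noteq> 0" "\<And>k::int. x * q powi k \<noteq> 1"
  shows "qpoch_inf (x * q powi c) q \<noteq> 0"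
proof (rule qpoch_inf_nonzero[OF assms(1)])
  fix k :: nat
  have "x * q powi c * q ^ k = x * q powi (c + int k)"
    using assms(2) by (simp add: power_int_add mult.assoc)
  then show "x * q powi c * q ^ k \<noteq> 1"
    using assms(3)[of "c + int k"] by argo
qed

lemma qpoch_q_of_nat:
  assumes "norm q < 1"
  shows "qpoch q q (int n) = qprod q q n"
proof (rule qpoch_of_nat[OF assms qpoch_inf_nonzero[OF assms]])
  fix k :: nat
  have "q * q ^ n * q ^ k = q * q ^ (n + k)"
    by (simp add: power_add)
  then show "q * q ^ n * q ^ k \<noteq> 1"
    using q_power_Suc_neq_1[OF assms, of "n + k"] by argo
qed

lemma qpoch_shift_qprod:
  assumes "norm q < 1" "q \<noteq> 0" "\<And>k::int. x * q powi k \<noteq> 1"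
  shows "qpoch (x * q) q (c + int n) = qpoch (x * q) q c * qprod (x * q powi (c + 1)) q n"
proof -
  have shift: "x * q * q powi c = x * q powi (c + 1)" "x * q powi (c + 1) * q ^ n = x * q powi (c + 1 + int n)"
    using assms(2) by (simp_all add: power_int_add mult_ac)
  have "qpoch_inf (x * q * q powi c) q \<noteq> 0" "qpoch_inf (x * q powi (c + 1) * q ^ n) q \<noteq> 0"
    unfolding shift by (simp_all add: qpoch_inf_shift_nonzero[OF assms])
  then show ?thesis
    by (simp add: qpoch_add[OF assms(2)] qpoch_of_nat[OF assms(1)] shift(1))
qed

section \<open>q-binomial coefficients and q-Vandermonde sums\<close>

definition qbinom :: "complex \<Rightarrow> nat \<Rightarrow> nat \<Rightarrow> complex" where
  "qbinom q n k = (if k \<le> n then qprod q q n / (qprod q q k * qprod q q (n - k)) else 0)"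

lemma qbinom_0 [simp]: "norm q < 1 \<Longrightarrow> qbinom q n 0 = 1"
  by (simp add: qbinom_def qprod_q_nonzero)

lemma qbinom_eq_0 [simp]: "n < k \<Longrightarrow> qbinom q n k = 0"
  by (simp add: qbinom_def)

lemma qbinom_self: "norm q < 1 \<Longrightarrow> qbinom q n n = 1"
  by (simp add: qbinom_def qprod_q_nonzero)

text \<open>Both q-Pascal rules rest on \<open>1 - q\<^sup>n\<^sup>+\<^sup>1 = (1 - q\<^sup>m\<^sup>+\<^sup>1) + q\<^sup>m\<^sup>+\<^sup>1 (1 - q\<^sup>k\<^sup>+\<^sup>1)\<close> and its mirror image;
  the nonzero factors are made opaque so that \<open>field_simps\<close> can clear the denominators.\<close>
lemma qbinom_Suc_Suc_split:
  assumes "norm q < 1" "n = Suc (k + m)"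
  obtains a b A B C where "a \<noteq> 0" "b \<noteq> 0" "A \<noteq> 0" "B \<noteq> 0"
    "qbinom q (Suc n) (Suc k) = C * (b + q ^ Suc m * a) / (A * a * (B * b))"
    "qbinom q (Suc n) (Suc k) = C * (a + q ^ Suc k * b) / (A * a * (B * b))"
    "qbinom q n (Suc k) = C / (A * a * B)" "qbinom q n k = C / (A * (B * b))"
proof
  let ?a = "1 - q * q ^ k" and ?b = "1 - q * q ^ m"
  show "?a \<noteq> 0" "?b \<noteq> 0" "qprod q q k \<noteq> 0" "qprod q q m \<noteq> 0"
    using qprod_q_nonzero[OF assms(1)] q_power_Suc_neq_1[OF assms(1)] by auto
  have diff: "Suc n - Suc k = Suc m" "n - Suc k = m" "n - k = Suc m"
    using assms(2) by auto
  have "1 - q * q ^ n = ?b + q ^ Suc m * ?a" "1 - q * q ^ n = ?a + q ^ Suc k * ?b"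
    using assms(2) by (simp_all add: algebra_simps power_add)
  then show "qbinom q (Suc n) (Suc k) = qprod q q n * (?b + q ^ Suc m * ?a) / (qprod q q k * ?a * (qprod q q m * ?b))"
    "qbinom q (Suc n) (Suc k) = qprod q q n * (?a + q ^ Suc k * ?b) / (qprod q q k * ?a * (qprod q q m * ?b))"
    "qbinom q n (Suc k) = qprod q q n / (qprod q q k * ?a * qprod q q m)"
    "qbinom q n k = qprod q q n / (qprod q q k * (qprod q q m * ?b))"
    unfolding qbinom_def diff by (auto simp: qprod_Suc assms(2))
qed

lemma qbinom_pascal:
  assumes "norm q < 1"
  shows "qbinom q (Suc n) (Suc k) = qbinom q n (Suc k) + q ^ (n - k) * qbinom q n k"
proof (cases "k < n")
  case True
  then obtain m where n: "n = Suc (k + m)"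
    by (auto dest: less_imp_Suc_add)
  obtain a b A B C where "a \<noteq> 0" "b \<noteq> 0" "A \<noteq> 0" "B \<noteq> 0"
    and split: "qbinom q (Suc n) (Suc k) = C * (b + q ^ Suc m * a) / (A * a * (B * b))"
      "qbinom q n (Suc k) = C / (A * a * B)" "qbinom q n k = C / (A * (B * b))"
    using qbinom_Suc_Suc_split[OF assms n] by metis
  moreover have "n - k = Suc m"
    using n by simp
  ultimately show ?thesis
    unfolding split by (simp add: field_simps)
qed (cases "k = n", auto simp: qbinom_self[OF assms])

lemma qbinom_pascal':
  assumes "norm q < 1"
  shows "qbinom q (Suc n) (Suc k) = q ^ Suc k * qbinom q n (Suc k) + qbinom q n k"
proof (cases "k < n")
  case True
  then obtain m where n: "n = Suc (k + m)"
    by (auto dest: less_imp_Suc_add)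
  obtain a b A B C where "a \<noteq> 0" "b \<noteq> 0" "A \<noteq> 0" "B \<noteq> 0"
    and split: "qbinom q (Suc n) (Suc k) = C * (a + q ^ Suc k * b) / (A * a * (B * b))"
      "qbinom q n (Suc k) = C / (A * a * B)" "qbinom q n k = C / (A * (B * b))"
    using qbinom_Suc_Suc_split[OF assms n] by metis
  then show ?thesis
    unfolding split by (simp add: field_simps)
qed (cases "k = n", auto simp: qbinom_self[OF assms])

lemma sum_qbinom_shift:
  assumes "norm q < 1"
  shows "(\<Sum>k\<le>n. qbinom q n k * g k) = g 0 + (\<Sum>k\<le>n. qbinom q n (Suc k) * g (Suc k))"
proof -
  have "(\<Sum>k\<le>n. qbinom q n k * g k) = (\<Sum>k\<le>Suc n. qbinom q n k * g k)"
    by simp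
  also have "\<dots> = g 0 + (\<Sum>k\<le>n. qbinom q n (Suc k) * g (Suc k))"
    using assms by (simp only: sum.atMost_Suc_shift qbinom_0 mult_1)
  finally show ?thesis .
qed

lemma sum_qbinom_Suc:
  assumes "norm q < 1"
  shows "(\<Sum>k\<le>Suc n. qbinom q (Suc n) k * g k) =
     (\<Sum>k\<le>n. qbinom q n k * g k) + (\<Sum>k\<le>n. q ^ (n - k) * qbinom q n k * g (Suc k))"
proof -
  have "(\<Sum>k\<le>Suc n. qbinom q (Suc n) k * g k) = g 0 + (\<Sum>k\<le>n. qbinom q (Suc n) (Suc k) * g (Suc k))"
    using assms by (simp only: sum.atMost_Suc_shift qbinom_0 mult_1)
  also have "\<dots> = g 0 + (\<Sum>k\<le>n. qbinom q n (Suc k) * g (Suc k))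
      + (\<Sum>k\<le>n. q ^ (n - k) * qbinom q n k * g (Suc k))"
    by (simp add: qbinom_pascal[OF assms] distrib_right sum.distrib)
  finally show ?thesis
    by (simp only: sum_qbinom_shift[OF assms])
qed

lemma sum_qbinom_Suc':
  assumes "norm q < 1"
  shows "(\<Sum>k\<le>Suc n. qbinom q (Suc n) k * g k) =
     (\<Sum>k\<le>n. q ^ k * qbinom q n k * g k) + (\<Sum>k\<le>n. qbinom q n k * g (Suc k))"
proof -
  have "(\<Sum>k\<le>Suc n. qbinom q (Suc n) k * g k) = g 0 + (\<Sum>k\<le>n. qbinom q (Suc n) (Suc k) * g (Suc k))"
    using assms by (simp only: sum.atMost_Suc_shift qbinom_0 mult_1)
  also have "\<dots> = (g 0 + (\<Sum>k\<le>n. qbinom q n (Suc k) * (q ^ Suc k * g (Suc k))))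
      + (\<Sum>k\<le>n. qbinom q n k * g (Suc k))"
    by (simp add: qbinom_pascal'[OF assms] sum.distrib algebra_simps)
  also have "g 0 + (\<Sum>k\<le>n. qbinom q n (Suc k) * (q ^ Suc k * g (Suc k))) = (\<Sum>k\<le>n. q ^ k * qbinom q n k * g k)"
    using sum_qbinom_shift[OF assms, of n "\<lambda>k. q ^ k * g k"] by (simp add: mult_ac)
  finally show ?thesis .
qed

definition qchu_term :: "complex \<Rightarrow> complex \<Rightarrow> complex \<Rightarrow> nat \<Rightarrow> nat \<Rightarrow> complex" where
  "qchu_term q \<mu> X N k =
     qprod \<mu> (inverse q) k * X ^ k * q ^ (k * k) * qprod (X * q ^ (k + 1)) q (N - k)"

lemma qchu_term_Suc:
  assumes "k \<le> N"
  shows "qchu_term q \<mu> X (Suc N) k = (1 - X * q ^ (N + 1)) * qchu_term q \<mu> X N k"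
proof -
  have "Suc N - k = Suc (N - k)" "X * q ^ (k + 1) * q ^ (N - k) = X * q ^ (N + 1)"
    using assms by (simp_all add: mult.assoc flip: power_add)
  then show ?thesis
    by (simp add: qchu_term_def qprod_Suc)
qed

lemma qchu_term_Suc_Suc:
  assumes "k \<le> N"
  shows "q ^ (N - k) * qchu_term q \<mu> X (Suc N) (Suc k) =
    (1 - \<mu>) * X * q ^ (N + 1) * qchu_term q (\<mu> * inverse q) (X * q) N k"
proof -
  have "(N - k) + Suc k * Suc k = (N + 1) + k + k * k"
    using assms by (simp add: algebra_simps)
  then have pw: "q ^ (N - k) * q ^ (Suc k * Suc k) = q ^ (N + 1) * q ^ k * q ^ (k * k)"
    by (simp only: power_add[symmetric])
  have "q ^ (N - k) * qchu_term q \<mu> X (Suc N) (Suc k) = (q ^ (N - k) * q ^ (Suc k * Suc k)) *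
      ((1 - \<mu>) * qprod (\<mu> * inverse q) (inverse q) k * X ^ Suc k * qprod (X * q * q ^ (k + 1)) q (N - k))"
    by (simp add: qchu_term_def qprod_Suc_shift mult_ac)
  also have "\<dots> = (1 - \<mu>) * X * q ^ (N + 1) * qchu_term q (\<mu> * inverse q) (X * q) N k"
    unfolding pw by (simp add: qchu_term_def power_mult_distrib mult_ac)
  finally show ?thesis .
qed

text \<open>A q-analogue of the Vandermonde convolution; \<open>qprod \<mu> (inverse q) k\<close> is \<open>(\<mu>; q\<^sup>-\<^sup>1)\<^sub>k\<close>.\<close>
lemma qchu_vandermonde:
  assumes "norm q < 1" "q \<noteq> 0"
  shows "(\<Sum>k\<le>N. qbinom q N k * qchu_term q \<mu> X N k) = qprod (X * q * \<mu>) q N"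
proof (induction N arbitrary: X \<mu>)
  case 0
  then show ?case
    using assms(1) by (simp add: qchu_term_def)
next
  case (Suc N)
  have "(\<Sum>k\<le>Suc N. qbinom q (Suc N) k * qchu_term q \<mu> X (Suc N) k) =
      (\<Sum>k\<le>N. qbinom q N k * qchu_term q \<mu> X (Suc N) k)
      + (\<Sum>k\<le>N. q ^ (N - k) * qbinom q N k * qchu_term q \<mu> X (Suc N) (Suc k))"
    by (rule sum_qbinom_Suc[OF assms(1)])
  also have "\<dots> = (1 - X * q ^ (N + 1)) * (\<Sum>k\<le>N. qbinom q N k * qchu_term q \<mu> X N k)
      + (1 - \<mu>) * X * q ^ (N + 1) * (\<Sum>k\<le>N. qbinom q N k * qchu_term q (\<mu> * inverse q) (X * q) N k)"
    unfolding sum_distrib_left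
  proof (intro arg_cong2[where f = "(+)"] sum.cong refl)
    fix k assume "k \<in> {..N}"
    then have k: "k \<le> N"
      by simp
    show "qbinom q N k * qchu_term q \<mu> X (Suc N) k
        = (1 - X * q ^ (N + 1)) * (qbinom q N k * qchu_term q \<mu> X N k)"
      using qchu_term_Suc[OF k] by (metis mult.left_commute)
    show "q ^ (N - k) * qbinom q N k * qchu_term q \<mu> X (Suc N) (Suc k)
        = (1 - \<mu>) * X * q ^ (N + 1) * (qbinom q N k * qchu_term q (\<mu> * inverse q) (X * q) N k)"
      using qchu_term_Suc_Suc[OF k] by (metis mult.assoc mult.commute)
  qed
  also have "\<dots> = qprod (X * q * \<mu>) q (Suc N)"
  proof -
    have "X * q * q * (\<mu> * inverse q) = X * q * \<mu>"
      using assms(2) by (simp add: field_simps)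
    then have "(\<Sum>k\<le>N. qbinom q N k * qchu_term q (\<mu> * inverse q) (X * q) N k) = qprod (X * q * \<mu>) q N"
      using Suc.IH[where X = "X * q" and \<mu> = "\<mu> * inverse q"] by (simp only:)
    then show ?thesis
      by (simp add: Suc.IH qprod_Suc algebra_simps)
  qed
  finally show ?case .
qed

lemma qbinom_Suc_Suc_mult_qprod:
  assumes "norm q < 1"
  shows "qbinom q (Suc n) (Suc k) * qprod q q (Suc k) = (1 - q * q ^ n) * (qbinom q n k * qprod q q k)"
proof (cases "k \<le> n")
  case True
  have nz: "qprod q q j \<noteq> 0" for j
    using qprod_q_nonzero[OF assms] .
  have "Suc n - Suc k = n - k"
    by simp
  with True nz have "qbinom q (Suc n) (Suc k) * qprod q q (Suc k) = qprod q q (Suc n) / qprod q q (n - k)"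
    by (simp add: qbinom_def)
  also have "\<dots> = (1 - q * q ^ n) * (qbinom q n k * qprod q q k)"
    using True nz by (simp add: qbinom_def qprod_Suc[of q q n] field_simps)
  finally show ?thesis .
qed (simp add: qbinom_def)

definition qprod_add_term :: "complex \<Rightarrow> complex \<Rightarrow> nat \<Rightarrow> nat \<Rightarrow> nat \<Rightarrow> complex" where
  "qprod_add_term q x i j k =
     qbinom q i k * qprod q q k * q ^ ((i - k) * (j - k)) * (qprod x q i * qprod x q j / qprod x q k)"

lemma qprod_add_term_Suc:
  assumes "k \<le> j"
  shows "q ^ k * qprod_add_term q x i (Suc j) k = q ^ i * (1 - x * q ^ j) * qprod_add_term q x i j k"
proof (cases "k \<le> i")
  case True
  have "k + (i - k) * Suc (j - k) = i + (i - k) * (j - k)"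
    using True by (simp add: algebra_simps)
  then have pw: "q ^ k * q ^ ((i - k) * Suc (j - k)) = q ^ i * q ^ ((i - k) * (j - k))"
    by (simp only: power_add[symmetric])
  have "Suc j - k = Suc (j - k)"
    using assms by simp
  then have "q ^ k * qprod_add_term q x i (Suc j) k = (q ^ k * q ^ ((i - k) * Suc (j - k))) *
      (qbinom q i k * qprod q q k * (qprod x q i * (qprod x q j * (1 - x * q ^ j)) / qprod x q k))"
    by (simp add: qprod_add_term_def qprod_Suc mult_ac)
  also have "\<dots> = q ^ i * (1 - x * q ^ j) * qprod_add_term q x i j k"
    unfolding pw by (simp add: qprod_add_term_def algebra_simps)
  finally show ?thesis .
qed (simp add: qprod_add_term_def)

lemma qprod_add_term_Suc_Suc:
  assumes "norm q < 1" "x \<noteq> 1"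
  shows "qprod_add_term q x (Suc i) (Suc j) (Suc k) = (1 - q * q ^ i) * (1 - x) * qprod_add_term q (x * q) i j k"
proof -
  have cancel: "a * A * (a * B) / (a * C) = a * (A * B / C)" if "a \<noteq> 0" for a A B C :: complex
    using that by (simp add: field_simps)
  have "qprod_add_term q x (Suc i) (Suc j) (Suc k) = (qbinom q (Suc i) (Suc k) * qprod q q (Suc k)) *
      q ^ ((i - k) * (j - k)) * ((1 - x) * qprod (x * q) q i * ((1 - x) * qprod (x * q) q j) / ((1 - x) * qprod (x * q) q k))"
    by (simp add: qprod_add_term_def qprod_Suc_shift)
  also have "\<dots> = (1 - q * q ^ i) * (1 - x) * qprod_add_term q (x * q) i j k"
    using assms(2) unfolding qbinom_Suc_Suc_mult_qprod[OF assms(1)] cancel[of "1 - x"] by (simp add: qprod_add_term_def mult_ac)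
  finally show ?thesis .
qed

lemma sum_qprod_add_term_Suc:
  assumes "(\<Sum>k\<le>j. qbinom q j k * qprod_add_term q x i j k) = qprod x q (i + j)"
  shows "(\<Sum>k\<le>j. q ^ k * qbinom q j k * qprod_add_term q x i (Suc j) k)
      = q ^ i * (1 - x * q ^ j) * qprod x q (i + j)"
proof -
  have "(\<Sum>k\<le>j. q ^ k * qbinom q j k * qprod_add_term q x i (Suc j) k)
      = q ^ i * (1 - x * q ^ j) * (\<Sum>k\<le>j. qbinom q j k * qprod_add_term q x i j k)"
    unfolding sum_distrib_left
    by (intro sum.cong refl) (use qprod_add_term_Suc in \<open>force simp: mult_ac\<close>)
  then show ?thesis
    by (simp add: assms)
qed

lemma sum_qprod_add_term_Suc_Suc:
  assumes "norm q < 1" "x \<noteq> 1"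
    and "(\<Sum>k\<le>j. qbinom q j k * qprod_add_term q (x * q) i j k) = qprod (x * q) q (i + j)"
  shows "(\<Sum>k\<le>j. qbinom q j k * qprod_add_term q x (Suc i) (Suc j) (Suc k))
      = qprod x q (Suc i + Suc j) - q ^ Suc i * (1 - x * q ^ j) * qprod x q (Suc i + j)"
proof -
  have shift: "qprod x q (Suc i + j) = (1 - x) * qprod (x * q) q (i + j)"
    by (simp add: qprod_Suc_shift)
  have "qprod x q (Suc i + Suc j) = qprod x q (Suc i + j) * (1 - x * q ^ (Suc i + j))"
    by (simp add: qprod_Suc)
  then have algebra: "(1 - q * q ^ i) * (1 - x) * qprod (x * q) q (i + j)
      = qprod x q (Suc i + Suc j) - q ^ Suc i * (1 - x * q ^ j) * qprod x q (Suc i + j)"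
    unfolding shift by (simp add: algebra_simps power_add)
  have "(\<Sum>k\<le>j. qbinom q j k * qprod_add_term q x (Suc i) (Suc j) (Suc k))
      = (1 - q * q ^ i) * (1 - x) * (\<Sum>k\<le>j. qbinom q j k * qprod_add_term q (x * q) i j k)"
    by (simp add: qprod_add_term_Suc_Suc[OF assms(1,2)] sum_distrib_left mult_ac)
  then show ?thesis
    unfolding assms(3) algebra .
qed

lemma qprod_add_expansion:
  assumes "norm q < 1" "\<And>t. x * q ^ t \<noteq> 1"
  shows "(\<Sum>k\<le>j. qbinom q j k * qprod_add_term q x i j k) = qprod x q (i + j)"
  using assms(2)
proof (induction j arbitrary: i x)
  case 0
  then show ?case
    using assms(1) qprod_nonzero[of x q 0] by (simp add: qprod_add_term_def)
next
  case (Suc j)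
  have second: "(\<Sum>k\<le>j. qbinom q j k * qprod_add_term q x i (Suc j) (Suc k))
      = qprod x q (i + Suc j) - q ^ i * (1 - x * q ^ j) * qprod x q (i + j)"
  proof (cases i)
    case 0
    then show ?thesis
      by (simp add: qprod_add_term_def qprod_Suc)
  next
    case (Suc i')
    have "x \<noteq> 1" "x * q * q ^ t \<noteq> 1" for t
      using Suc.prems[of 0] Suc.prems[of "Suc t"] by (simp_all add: mult.assoc)
    then show ?thesis
      unfolding Suc by (intro sum_qprod_add_term_Suc_Suc assms(1) Suc.IH) auto
  qed
  have "(\<Sum>k\<le>Suc j. qbinom q (Suc j) k * qprod_add_term q x i (Suc j) k)
      = (\<Sum>k\<le>j. q ^ k * qbinom q j k * qprod_add_term q x i (Suc j) k)
      + (\<Sum>k\<le>j. qbinom q j k * qprod_add_term q x i (Suc j) (Suc k))"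
    by (rule sum_qbinom_Suc'[OF assms(1)])
  then show ?case
    by (simp only: sum_qprod_add_term_Suc[OF Suc.IH[OF Suc.prems]] second) simp
qed

lemma sum_qsquare_div_qprod:
  assumes "norm q < 1" "q \<noteq> 0" "\<And>t. Y * q * q ^ t \<noteq> 1"
  shows "(\<Sum>u\<le>L. Y ^ u * q ^ (u * u) / (qprod q q u * qprod q q (L - u) * qprod (Y * q) q u))
         = 1 / (qprod q q L * qprod (Y * q) q L)"
proof -
  have nz: "qprod q q n \<noteq> 0" "qprod (Y * q) q n \<noteq> 0" for n
    using qprod_q_nonzero[OF assms(1)] qprod_nonzero[OF assms(3)] by auto
  define K where "K = qprod q q L * qprod (Y * q) q L"
  have "K * (\<Sum>u\<le>L. Y ^ u * q ^ (u * u) / (qprod q q u * qprod q q (L - u) * qprod (Y * q) q u))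
      = (\<Sum>u\<le>L. qbinom q L u * qchu_term q 0 Y L u)"
    unfolding sum_distrib_left
  proof (rule sum.cong[OF refl])
    fix u assume "u \<in> {..L}"
    then have "u \<le> L"
      by simp
    moreover from this have "qprod (Y * q) q L = qprod (Y * q) q u * qprod (Y * q ^ (u + 1)) q (L - u)"
      using qprod_add[of "Y * q" q u "L - u"] by (simp add: mult_ac)
    ultimately show "K * (Y ^ u * q ^ (u * u) / (qprod q q u * qprod q q (L - u) * qprod (Y * q) q u))
        = qbinom q L u * qchu_term q 0 Y L u"
      using nz by (simp add: K_def qbinom_def qchu_term_def field_simps)
  qed
  also have "\<dots> = 1"
    using qchu_vandermonde[OF assms(1,2), of L 0 Y] by simp
  finally show ?thesis
    using nz by (simp add: K_def field_simps)
qed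

text \<open>The reciprocal \<open>1 / (q; q)\<^sub>M\<^sub>-\<^sub>k\<close>, set to zero for \<open>k > M\<close> (as \<open>1 / (q; q)\<^sub>n = 0\<close> for \<open>n < 0\<close>).\<close>
definition inv_qfact_diff :: "complex \<Rightarrow> nat \<Rightarrow> nat \<Rightarrow> complex" where
  "inv_qfact_diff q M k = (if k \<le> M then 1 / qprod q q (M - k) else 0)"

lemma qprod_power_inverse:
  assumes "norm q < 1" "q \<noteq> 0"
  shows "qprod (q ^ M) (inverse q) k = qprod q q M * inv_qfact_diff q M k"
proof (induction k)
  case 0
  then show ?case
    using qprod_q_nonzero[OF assms(1)] by (simp add: inv_qfact_diff_def)
next
  case (Suc k)
  have step: "qprod (q ^ M) (inverse q) (Suc k) = qprod (q ^ M) (inverse q) k * (1 - q ^ M / q ^ k)"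
    by (simp add: qprod_Suc power_inverse divide_inverse)
  consider "Suc k \<le> M" | "k = M" | "M < k"
    by linarith
  then show ?case
  proof cases
    case 1
    then have diff: "M - k = Suc (M - Suc k)"
      by simp
    have "q ^ M / q ^ k = q * q ^ (M - Suc k)"
      using 1 assms(2) by (simp add: power_diff[symmetric] diff)
    moreover have "qprod q q (M - Suc k) \<noteq> 0" "1 - q * q ^ (M - Suc k) \<noteq> 0"
      using qprod_q_nonzero[OF assms(1)] q_power_Suc_neq_1[OF assms(1), of "M - Suc k"] by auto
    ultimately show ?thesis
      using 1 unfolding step Suc.IH by (simp add: inv_qfact_diff_def diff qprod_Suc field_simps)
  next
    case 2
    then show ?thesis
      unfolding step using assms(2) by (simp add: inv_qfact_diff_def)
  next
    case 3
    then show ?thesis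
      unfolding step Suc.IH by (simp add: inv_qfact_diff_def)
  qed
qed

lemma sum_inv_qfact_diff_qsquare:
  assumes "norm q < 1" "q \<noteq> 0" "\<And>t. X * q * q ^ t \<noteq> 1"
  shows "(\<Sum>k\<le>M. inv_qfact_diff q N k * X ^ k * q ^ (k * k) / (qprod q q k * qprod q q (M - k) * qprod (X * q) q k))
         = qprod (X * q) q (N + M) / (qprod q q N * qprod q q M * qprod (X * q) q N * qprod (X * q) q M)"
proof -
  have nz: "qprod q q n \<noteq> 0" "qprod (X * q) q n \<noteq> 0" for n
    using qprod_q_nonzero[OF assms(1)] qprod_nonzero[OF assms(3)] by auto
  define K where "K = qprod q q M * qprod q q N * qprod (X * q) q M"
  have "K * (\<Sum>k\<le>M. inv_qfact_diff q N k * X ^ k * q ^ (k * k) / (qprod q q k * qprod q q (M - k) * qprod (X * q) q k))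
      = (\<Sum>k\<le>M. qbinom q M k * qchu_term q (q ^ N) X M k)"
    unfolding sum_distrib_left
  proof (rule sum.cong[OF refl])
    fix k assume "k \<in> {..M}"
    then have "k \<le> M"
      by simp
    moreover from this have "qprod (X * q) q M = qprod (X * q) q k * qprod (X * q ^ (k + 1)) q (M - k)"
      using qprod_add[of "X * q" q k "M - k"] by (simp add: mult_ac)
    ultimately show "K * (inv_qfact_diff q N k * X ^ k * q ^ (k * k) / (qprod q q k * qprod q q (M - k) * qprod (X * q) q k))
        = qbinom q M k * qchu_term q (q ^ N) X M k"
      using nz unfolding qchu_term_def qprod_power_inverse[OF assms(1,2)]
      by (simp add: K_def qbinom_def field_simps)
  qed
  also have "\<dots> = qprod (X * q * q ^ N) q M"
    by (rule qchu_vandermonde[OF assms(1,2)])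
  finally show ?thesis
    using nz unfolding qprod_add[of "X * q" q N M] by (simp add: K_def field_simps)
qed

lemma sum_atMost_drop_zeros:
  fixes f :: "nat \<Rightarrow> 'a::comm_monoid_add"
  assumes "k \<le> N" "\<And>i. i < k \<Longrightarrow> f i = 0"
  shows "(\<Sum>i\<le>N. f i) = (\<Sum>u\<le>N - k. f (k + u))"
proof -
  have "{..N} = {..<k} \<union> {k..N}"
    using assms(1) by auto
  then have "(\<Sum>i\<le>N. f i) = (\<Sum>i<k. f i) + (\<Sum>i\<in>{k..N}. f i)"
    by (simp add: sum.union_disjoint ivl_disj_int)
  also have "\<dots> = (\<Sum>u\<in>{0..N - k}. f (u + k))"
    using assms sum.shift_bounds_cl_nat_ivl[of f 0 k "N - k"] by simp
  finally show ?thesis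
    by (simp add: atLeast0AtMost add.commute)
qed

section \<open>The summation at natural indices\<close>

definition factor_term :: "complex \<Rightarrow> complex \<Rightarrow> nat \<Rightarrow> nat \<Rightarrow> nat \<Rightarrow> complex" where
  "factor_term q Z N k i =
     qbinom q i k * Z ^ i * q ^ (i * (i - k)) / (qprod q q (N - i) * qprod q q i * qprod (Z * q) q i)"

lemma sum_factor_term:
  assumes "norm q < 1" "q \<noteq> 0" "\<And>t. Z * q * q ^ t \<noteq> 1"
  shows "(\<Sum>i\<le>N. factor_term q Z N k i) = inv_qfact_diff q N k * Z ^ k / (qprod q q k * qprod (Z * q) q N)"
proof (cases "k \<le> N")
  case True
  let ?Y = "Z * q ^ k"
  have hY: "?Y * q * q ^ t \<noteq> 1" for t
    using assms(3)[of "k + t"] by (simp add: power_add mult_ac)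
  have nz: "qprod q q n \<noteq> 0" "qprod (Z * q) q n \<noteq> 0" "qprod (?Y * q) q n \<noteq> 0" for n
    using qprod_q_nonzero[OF assms(1)] qprod_nonzero[OF assms(3)] qprod_nonzero[OF hY] by auto
  have split: "qprod (Z * q) q (k + u) = qprod (Z * q) q k * qprod (?Y * q) q u" for u
    by (simp add: qprod_add mult_ac)
  have "(\<Sum>i\<le>N. factor_term q Z N k i) = (\<Sum>u\<le>N - k. factor_term q Z N k (k + u))"
    by (rule sum_atMost_drop_zeros[OF True]) (simp add: factor_term_def)
  also have "\<dots> = (\<Sum>u\<le>N - k. (Z ^ k / (qprod q q k * qprod (Z * q) q k)) *
      (?Y ^ u * q ^ (u * u) / (qprod q q u * qprod q q (N - k - u) * qprod (?Y * q) q u)))"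
  proof (rule sum.cong[OF refl])
    fix u
    have "q ^ ((k + u) * u) = q ^ (k * u) * q ^ (u * u)"
      by (simp add: power_add algebra_simps)
    then show "factor_term q Z N k (k + u) = (Z ^ k / (qprod q q k * qprod (Z * q) q k)) *
        (?Y ^ u * q ^ (u * u) / (qprod q q u * qprod q q (N - k - u) * qprod (?Y * q) q u))"
      unfolding factor_term_def qbinom_def split using nz
      by (simp add: field_simps power_add power_mult_distrib power_mult)
  qed
  also have "\<dots> = (Z ^ k / (qprod q q k * qprod (Z * q) q k)) * (1 / (qprod q q (N - k) * qprod (?Y * q) q (N - k)))"
    by (simp only: sum_distrib_left[symmetric] sum_qsquare_div_qprod[OF assms(1,2) hY])
  also have "\<dots> = inv_qfact_diff q N k * Z ^ k / (qprod q q k * qprod (Z * q) q N)"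
    using True nz split[of "N - k"] by (simp add: inv_qfact_diff_def field_simps)
  finally show ?thesis .
qed (simp add: factor_term_def inv_qfact_diff_def)

text \<open>Kernel and \<open>\<Phi>\<close> at \<open>(r, s) = (a + i, b + j)\<close>, up to constant factors, with
  \<open>Z = z q\<^sup>2\<^sup>a\<^sup>-\<^sup>b\<close> and \<open>W = w q\<^sup>2\<^sup>b\<^sup>-\<^sup>a\<close> (see \<open>Kker_shift\<close> and \<open>Phi_shift\<close>).\<close>
definition Kker_nat :: "complex \<Rightarrow> complex \<Rightarrow> complex \<Rightarrow> nat \<Rightarrow> nat \<Rightarrow> nat \<Rightarrow> nat \<Rightarrow> complex" where
  "Kker_nat q Z W N M i j = Z ^ i * W ^ j * q ^ (i * i + j * j) / q ^ (i * j) / (qprod q q (N - i) * qprod q q (M - j))"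

definition Phi_nat :: "complex \<Rightarrow> complex \<Rightarrow> complex \<Rightarrow> nat \<Rightarrow> nat \<Rightarrow> complex" where
  "Phi_nat q Z W i j = qprod (Z * W * q) q (i + j) /
     (qprod q q i * qprod (Z * q) q i * qprod (Z * W * q) q i * qprod q q j * qprod (W * q) q j * qprod (Z * W * q) q j)"

lemma sum_triple_factor:
  fixes c :: "'k \<Rightarrow> 'a::comm_semiring_0"
  shows "(\<Sum>i\<in>I. \<Sum>j\<in>J. \<Sum>k\<in>K. c k * a i k * b j k) = (\<Sum>k\<in>K. c k * ((\<Sum>i\<in>I. a i k) * (\<Sum>j\<in>J. b j k)))"
proof -
  have "(\<Sum>i\<in>I. \<Sum>j\<in>J. \<Sum>k\<in>K. c k * a i k * b j k) = (\<Sum>i\<in>I. \<Sum>k\<in>K. \<Sum>j\<in>J. c k * a i k * b j k)"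
    by (rule sum.cong[OF refl], rule sum.swap)
  also have "\<dots> = (\<Sum>k\<in>K. \<Sum>i\<in>I. \<Sum>j\<in>J. c k * a i k * b j k)"
    by (rule sum.swap)
  finally show ?thesis
    by (simp only: mult.assoc sum_product) (simp only: sum_distrib_left)
qed

lemma Kker_Phi_nat_term:
  assumes "q \<noteq> 0" "\<And>n. qprod q q n \<noteq> 0" "\<And>n. qprod (Z * q) q n \<noteq> 0" "\<And>n. qprod (W * q) q n \<noteq> 0"
    "\<And>n. qprod (Z * W * q) q n \<noteq> 0"
  shows "Kker_nat q Z W N M i j * Phi_nat q Z W i j / qprod (Z * W * q) q (i + j) *
      (qbinom q j k * qprod_add_term q (Z * W * q) i j k) =
    qprod q q k * q ^ (k * k) / qprod (Z * W * q) q k * factor_term q Z N k i * factor_term q W M k j"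
proof (cases "k \<le> i \<and> k \<le> j")
  case True
  then obtain u v where uv: "i = k + u" "j = k + v"
    by (metis le_Suc_ex)
  have "i * i + j * j + (i - k) * (j - k) = i * j + (i * (i - k) + j * (j - k) + k * k)"
    unfolding uv by (simp add: algebra_simps)
  then have "q ^ (i * i + j * j) * q ^ ((i - k) * (j - k)) = q ^ (i * j) * (q ^ (i * (i - k)) * q ^ (j * (j - k)) * q ^ (k * k))"
    by (simp only: power_add[symmetric])
  then have pw: "q ^ (i * i + j * j) / q ^ (i * j) * q ^ ((i - k) * (j - k)) = q ^ (i * (i - k)) * q ^ (j * (j - k)) * q ^ (k * k)"
    using assms(1) by (simp add: field_simps)
  have "Kker_nat q Z W N M i j * Phi_nat q Z W i j / qprod (Z * W * q) q (i + j) *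
      (qbinom q j k * qprod_add_term q (Z * W * q) i j k) = (q ^ (i * i + j * j) / q ^ (i * j) * q ^ ((i - k) * (j - k))) *
      (Z ^ i * W ^ j * qbinom q i k * qbinom q j k * qprod q q k / qprod (Z * W * q) q k /
      (qprod q q (N - i) * qprod q q (M - j) * qprod q q i * qprod (Z * q) q i * qprod q q j * qprod (W * q) q j))"
    unfolding Kker_nat_def Phi_nat_def qprod_add_term_def using assms by (simp add: field_simps)
  also have "\<dots> = qprod q q k * q ^ (k * k) / qprod (Z * W * q) q k * factor_term q Z N k i * factor_term q W M k j"
    unfolding pw factor_term_def using assms by (simp add: field_simps)
  finally show ?thesis .
qed (auto simp: factor_term_def qprod_add_term_def)

lemma Kker_Phi_nat_expand:
  assumes "norm q < 1" "q \<noteq> 0" "j \<le> M"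
    and "\<And>t. Z * q * q ^ t \<noteq> 1" "\<And>t. W * q * q ^ t \<noteq> 1" "\<And>t. Z * W * q * q ^ t \<noteq> 1"
  shows "Kker_nat q Z W N M i j * Phi_nat q Z W i j =
    (\<Sum>k\<le>M. qprod q q k * q ^ (k * k) / qprod (Z * W * q) q k * factor_term q Z N k i * factor_term q W M k j)"
proof -
  let ?U = "Z * W * q"
  have nz: "qprod q q n \<noteq> 0" "qprod (Z * q) q n \<noteq> 0" "qprod (W * q) q n \<noteq> 0" "qprod ?U q n \<noteq> 0" for n
    using qprod_q_nonzero[OF assms(1)] qprod_nonzero[OF assms(4)] qprod_nonzero[OF assms(5)]
      qprod_nonzero[OF assms(6)] by auto
  have "qprod ?U q (i + j) = (\<Sum>k\<le>j. qbinom q j k * qprod_add_term q ?U i j k)"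
    using qprod_add_expansion[OF assms(1) assms(6)] by simp
  also have "\<dots> = (\<Sum>k\<le>M. qbinom q j k * qprod_add_term q ?U i j k)"
    by (rule sum.mono_neutral_left) (use assms(3) in auto)
  finally have expand: "qprod ?U q (i + j) = (\<Sum>k\<le>M. qbinom q j k * qprod_add_term q ?U i j k)" .
  define X where "X = Kker_nat q Z W N M i j * Phi_nat q Z W i j / qprod ?U q (i + j)"
  have "Kker_nat q Z W N M i j * Phi_nat q Z W i j = X * qprod ?U q (i + j)"
    using nz by (simp add: X_def)
  also have "\<dots> = (\<Sum>k\<le>M. X * (qbinom q j k * qprod_add_term q ?U i j k))"
    by (simp add: expand sum_distrib_left)
  also have "\<dots> = (\<Sum>k\<le>M. qprod q q k * q ^ (k * k) / qprod ?U q k * factor_term q Z N k i * factor_term q W M k j)"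
    unfolding X_def by (simp only: Kker_Phi_nat_term[OF assms(2) nz])
  finally show ?thesis .
qed

lemma sum_Kker_nat_Phi_nat:
  assumes "norm q < 1" "q \<noteq> 0"
    and "\<And>t. Z * q * q ^ t \<noteq> 1" "\<And>t. W * q * q ^ t \<noteq> 1" "\<And>t. Z * W * q * q ^ t \<noteq> 1"
  shows "(\<Sum>i\<le>N. \<Sum>j\<le>M. Kker_nat q Z W N M i j * Phi_nat q Z W i j) = Phi_nat q Z W N M"
proof -
  let ?U = "Z * W * q"
  have nz: "qprod q q n \<noteq> 0" "qprod (Z * q) q n \<noteq> 0" "qprod (W * q) q n \<noteq> 0" "qprod ?U q n \<noteq> 0" for n
    using qprod_q_nonzero[OF assms(1)] qprod_nonzero[OF assms(3)] qprod_nonzero[OF assms(4)]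
      qprod_nonzero[OF assms(5)] by auto
  define c where "c k = qprod q q k * q ^ (k * k) / qprod ?U q k" for k
  have "(\<Sum>i\<le>N. \<Sum>j\<le>M. Kker_nat q Z W N M i j * Phi_nat q Z W i j)
      = (\<Sum>i\<le>N. \<Sum>j\<le>M. \<Sum>k\<le>M. c k * factor_term q Z N k i * factor_term q W M k j)"
    unfolding c_def by (intro sum.cong refl) (simp add: Kker_Phi_nat_expand assms)
  also have "\<dots> = (\<Sum>k\<le>M. c k * ((\<Sum>i\<le>N. factor_term q Z N k i) * (\<Sum>j\<le>M. factor_term q W M k j)))"
    by (rule sum_triple_factor)
  also have "\<dots> = (\<Sum>k\<le>M. c k * ((inv_qfact_diff q N k * Z ^ k / (qprod q q k * qprod (Z * q) q N))
      * (inv_qfact_diff q M k * W ^ k / (qprod q q k * qprod (W * q) q M))))"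
    by (simp add: sum_factor_term assms)
  also have "\<dots> = (\<Sum>k\<le>M. inv_qfact_diff q N k * (Z * W) ^ k * q ^ (k * k)
      / (qprod q q k * qprod q q (M - k) * qprod ?U q k)) / (qprod (Z * q) q N * qprod (W * q) q M)"
    unfolding sum_divide_distrib
    by (intro sum.cong refl) (use nz in \<open>simp add: c_def inv_qfact_diff_def field_simps power_mult_distrib\<close>)
  also have "\<dots> = Phi_nat q Z W N M"
    unfolding sum_inv_qfact_diff_qsquare[OF assms(1,2,5)] using nz by (simp add: Phi_nat_def field_simps)
  finally show ?thesis .
qed

section \<open>The summation at integer indices\<close>

lemma sum_int_interval:
  "(\<Sum>r\<in>{a..a + int N}. f r) = (\<Sum>i\<le>N. f (a + int i))"
  by (rule sum.reindex_bij_witness[where i = "\<lambda>i. a + int i" and j = "\<lambda>r. nat (r - a)"]) auto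

lemma power_int_shift_neq_1:
  fixes x q :: complex
  assumes "q \<noteq> 0" "\<And>k::int. x * q powi k \<noteq> 1"
  shows "x * q powi c * q * q ^ t \<noteq> 1"
proof -
  have "x * q powi c * q * q ^ t = x * q powi (c + 1 + int t)"
    using assms(1) by (simp add: power_int_add mult_ac)
  then show ?thesis
    using assms(2) by metis
qed

lemma Phi_eq_0:
  assumes "norm q < 1" "q \<noteq> 0" "n < y1 \<or> m + y3 < 0"
  shows "Phi n m y1 y2 y3 z w q = 0"
  using assms qpoch_q_neg[OF assms(1,2), of "n - y1"] qpoch_q_neg[OF assms(1,2), of "m + y3"]
  by (auto simp: Phi_def)

lemma Kker_shift:
  fixes z w q :: complex and a b :: int
  assumes "norm q < 1" "q \<noteq> 0" "z \<noteq> 0" "w \<noteq> 0" "i \<le> N" "j \<le> M"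
  shows "Kker (a + int N) (b + int M) (a + int i) (b + int j) z w q =
    z powi a * w powi b * q powi (a * a - a * b + b * b) *
      Kker_nat q (z * q powi (2 * a - b)) (w * q powi (2 * b - a)) N M i j"
proof -
  have diff: "a + int N - (a + int i) = int (N - i)" "b + int M - (b + int j) = int (M - j)"
    using assms(5,6) by auto
  have "(a + int i) * (a + int i) - (a + int i) * (b + int j) + (b + int j) * (b + int j)
     = (a * a - a * b + b * b) + ((2 * a - b) * int i + ((2 * b - a) * int j + (int (i * i + j * j) - int (i * j))))"
    by (simp add: algebra_simps)
  then have exp: "q powi ((a + int i) * (a + int i) - (a + int i) * (b + int j) + (b + int j) * (b + int j))
     = q powi (a * a - a * b + b * b) * (q powi ((2 * a - b) * int i) * (q powi ((2 * b - a) * int j) *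
        q powi (int (i * i + j * j) - int (i * j))))"
    using assms(2) by (simp only: power_int_add simp_thms)
  have zw: "z powi (a + int i) = z powi a * z ^ i" "w powi (b + int j) = w powi b * w ^ j"
    using assms(3,4) by (simp_all add: power_int_add)
  have ZW: "(z * q powi (2 * a - b)) ^ i = z ^ i * q powi ((2 * a - b) * int i)"
    "(w * q powi (2 * b - a)) ^ j = w ^ j * q powi ((2 * b - a) * int j)"
    by (simp_all add: power_mult_distrib power_int_power')
  have q: "q ^ (i * i + j * j) / q ^ (i * j) = q powi (int (i * i + j * j) - int (i * j))"
    by (subst power_int_diff) (use assms(2) in \<open>simp_all only: power_int_of_nat simp_thms\<close>)
  have "z powi (a + int i) * w powi (b + int j) *
      q powi ((a + int i) * (a + int i) - (a + int i) * (b + int j) + (b + int j) * (b + int j))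
    = (z powi a * w powi b * q powi (a * a - a * b + b * b)) *
      ((z * q powi (2 * a - b)) ^ i * (w * q powi (2 * b - a)) ^ j * q ^ (i * i + j * j) / q ^ (i * j))"
    unfolding zw ZW exp q[symmetric] by (simp add: mult_ac)
  then show ?thesis
    unfolding Kker_def Kker_nat_def diff qpoch_q_of_nat[OF assms(1)] by simp
qed

lemma Phi_shift:
  fixes z w q :: complex and a b :: int
  assumes "norm q < 1" "q \<noteq> 0"
    and "\<And>k::int. z * q powi k \<noteq> 1" "\<And>k::int. w * q powi k \<noteq> 1" "\<And>k::int. z * w * q powi k \<noteq> 1"
  shows "Phi (a + int i) (b + int j) a (b - a) (- b) z w q =
    Phi a b a (b - a) (- b) z w q * Phi_nat q (z * q powi (2 * a - b)) (w * q powi (2 * b - a)) i j"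
proof -
  let ?Z = "z * q powi (2 * a - b)" and ?W = "w * q powi (2 * b - a)"
  have "q powi (a + b) = q powi (2 * a - b) * q powi (2 * b - a)"
    using assms(2) by (simp add: ac_simps flip: power_int_add)
  then have base: "z * q powi (2 * a - b + 1) = ?Z * q" "w * q powi (2 * b - a + 1) = ?W * q"
    "z * w * q powi (a + b + 1) = ?Z * ?W * q"
    using assms(2) by (simp_all add: power_int_add mult_ac)
  have "Phi (a + int i) (b + int j) a (b - a) (- b) z w q =
      qpoch (z * w * q) q (a + b) / (qpoch (z * q) q (2 * a - b) * qpoch (z * w * q) q (a + b) *
        qpoch (w * q) q (2 * b - a) * qpoch (z * w * q) q (a + b)) * Phi_nat q ?Z ?W i j" for i j
  proof -
    have idx: "a + int i + (b + int j) = (a + b) + int (i + j)" "a + int i - a = int i"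
      "a + int i - (b - a) = (2 * a - b) + int i" "a + int i - - b = (a + b) + int i"
      "b + int j + - b = int j" "b + int j + (b - a) = (2 * b - a) + int j" "b + int j + a = (a + b) + int j"
      by simp_all
    show ?thesis
      unfolding Phi_def Phi_nat_def idx qpoch_shift_qprod[OF assms(1,2,3)] qpoch_shift_qprod[OF assms(1,2,4)]
        qpoch_shift_qprod[OF assms(1,2,5)] qpoch_q_of_nat[OF assms(1)] base
      by (simp add: mult_ac)
  qed
  from this[of i j] this[of 0 0] show ?thesis
    by (simp add: Phi_nat_def)
qed

lemma sum_Kker_Phi_shifted:
  fixes z w q :: complex and a b n m :: int
  assumes "norm q < 1" "q \<noteq> 0" "z \<noteq> 0" "w \<noteq> 0"
    and hz: "\<And>k::int. z * q powi k \<noteq> 1" and hw: "\<And>k::int. w * q powi k \<noteq> 1"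
    and hzw: "\<And>k::int. z * w * q powi k \<noteq> 1"
  shows "(\<Sum>r\<in>{a..n}. \<Sum>s\<in>{b..m}. Kker n m r s z w q * Phi r s a (b - a) (- b) z w q)
     = z powi a * w powi b * q powi (a * a - a * b + b * b) * Phi n m a (b - a) (- b) z w q"
proof (cases "a \<le> n \<and> b \<le> m")
  case True
  then obtain N M where n: "n = a + int N" and m: "m = b + int M"
    by (metis zle_iff_zadd)
  define Z W where "Z = z * q powi (2 * a - b)" and "W = w * q powi (2 * b - a)"
  have ZW: "Z * W = z * w * q powi (a + b)"
    using assms(2) by (simp add: Z_def W_def ac_simps flip: power_int_add)
  have hyps: "Z * q * q ^ t \<noteq> 1" "W * q * q ^ t \<noteq> 1" "Z * W * q * q ^ t \<noteq> 1" for t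
    unfolding ZW unfolding Z_def W_def
    by (intro power_int_shift_neq_1[OF assms(2)] hz hw hzw)+
  have "(\<Sum>r\<in>{a..n}. \<Sum>s\<in>{b..m}. Kker n m r s z w q * Phi r s a (b - a) (- b) z w q)
      = (\<Sum>i\<le>N. \<Sum>j\<le>M. Kker n m (a + int i) (b + int j) z w q * Phi (a + int i) (b + int j) a (b - a) (- b) z w q)"
    unfolding n m sum_int_interval ..
  also have "\<dots> = z powi a * w powi b * q powi (a * a - a * b + b * b) * Phi a b a (b - a) (- b) z w q *
      (\<Sum>i\<le>N. \<Sum>j\<le>M. Kker_nat q Z W N M i j * Phi_nat q Z W i j)"
    unfolding sum_distrib_left n m Z_def W_def
    by (intro sum.cong refl) (simp add: Kker_shift Phi_shift assms)
  also have "\<dots> = z powi a * w powi b * q powi (a * a - a * b + b * b) * (Phi a b a (b - a) (- b) z w q * Phi_nat q Z W N M)"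
    by (simp only: sum_Kker_nat_Phi_nat[OF assms(1,2) hyps] mult.assoc)
  also have "\<dots> = z powi a * w powi b * q powi (a * a - a * b + b * b) * Phi n m a (b - a) (- b) z w q"
    unfolding n m Z_def W_def Phi_shift[OF assms(1,2) hz hw hzw] ..
  finally show ?thesis .
next
  case False
  then show ?thesis
    using Phi_eq_0[OF assms(1,2)] by auto
qed

theorem corollary4p5:
  fixes n m y1 y2 y3 :: int and z w q :: complex
  assumes "y1 + y2 + y3 = 0"
    and "q \<noteq> 0" and "norm q < 1" and "z \<noteq> 0" and "w \<noteq> 0"
    and "\<And>k::int. z * (q powi k) \<noteq> 1"
    and "\<And>k::int. w * (q powi k) \<noteq> 1"
    and "\<And>k::int. z * w * (q powi k) \<noteq> 1"
  shows "(\<Sum>r\<in>{y1..n}. \<Sum>s\<in>{y1+y2..m}. Kker n m r s z w q * Phi r s y1 y2 y3 z w q)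
         = (z powi y1) * (w powi (y1 + y2)) * (q powi ((y1^2 + y2^2 + y3^2) div 2)) * Phi n m y1 y2 y3 z w q"
proof -
  have y2: "y1 + y2 - y1 = y2" and y3: "- (y1 + y2) = y3"
    using assms(1) by simp_all
  have "y1^2 + y2^2 + y3^2 = 2 * (y1 * y1 - y1 * (y1 + y2) + (y1 + y2) * (y1 + y2))"
    unfolding y3[symmetric] by (simp add: power2_eq_square algebra_simps)
  then have "(y1^2 + y2^2 + y3^2) div 2 = y1 * y1 - y1 * (y1 + y2) + (y1 + y2) * (y1 + y2)"
    by simp
  with sum_Kker_Phi_shifted[OF assms(3,2,4-8), where a = y1 and b = "y1 + y2" and n = n and m = m] show ?thesis
    unfolding y2 y3 by simp
qed

end
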